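(* Suppose $X$ is a polyhedron and $\Lambda\subsetneq\Lambda_X^\star(\mathcal{A})$ is a proper subset. Then there exists $\tilde y\in\mathbb{R}^{\mathcal{A}}$ such that $\phi_{\lambda'}(\tilde y)\ge0$ for all $\lambda'\in\Lambda$, and $\phi_\lambda(\tilde y)<0$ for some $\lambda\in\Lambda_X^\star(\mathcal{A})\setminus\Lambda$.
   Context: $X\subset\mathbb{R}^n$ is a nonempty closed convex set and $\mathcal{A}\subset\mathbb{R}^n$ is a nonempty finite set such that the functions $x\mapsto\exp(\alpha^Tx)$, $\alpha\in\mathcal{A}$, are linearly independent on $X$. $\mathbb{R}^{\mathcal{A}}$ denotes real vectors indexed by $\mathcal{A}$. $\mathcal{A}\nu=\sum_\alpha\alpha\nu_\alpha$. $\sigma_X(y)=\sup\{y^Tx:x\in X\}$. $N_\beta=\{\nu\in\mathbb{R}^{\mathcal{A}}:\nu_\alpha\ge0\ \forall\alpha\neq\beta,\ \sum_\alpha\nu_\alpha=0\}$. A vector $\nu^\star\in N_\beta$ is an $X$-circuit of $\mathcal{A}$ if (1) $\nu^\star\neq0$, (2) $\sigma_X(-\mathcal{A}\nu^\star)<\infty$, and (3) $\nu^\star$ cannot be written as a convex combination of two non-proportional vectors $\nu^{(1)},\nu^{(2)}\in N_\beta$ such that the map $\nu\mapsto\sigma_X(-\mathcal{A}\nu)$ is affine on the segment $[\nu^{(1)},\nu^{(2)}]$. $\Lambda_X(\mathcal{A})$ is the set of all $X$-circuits $\lambda$ (over all $\beta\in\mathcal{A}$) normalized so that the unique negative entry equals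 $-1$. The functional form of $\lambda\in\Lambda_X(\mathcal{A})$ is the affine function $\phi_\lambda(y)=\sum_\alpha y_\alpha\lambda_\alpha+\sigma_X(-\mathcal{A}\lambda)$ on $\mathbb{R}^{\mathcal{A}}$, also identified with the vector $(\lambda,\sigma_X(-\mathcal{A}\lambda))\in\mathbb{R}^{\mathcal{A}}\times\mathbb{R}$. The circuit graph is $G_X(\mathcal{A})=\operatorname{cone}(\{\phi_\lambda:\lambda\in\Lambda_X(\mathcal{A})\}\cup\{(0,1)\})$. The set of normalized reduced $X$-circuits $\Lambda_X^\star(\mathcal{A})$ consists of those $\lambda\in\Lambda_X(\mathcal{A})$ for which $\{t\phi_\lambda:t\ge0\}$ is an extreme ray of $G_X(\mathcal{A})$. *)

theory Defs
  imports "HOL-Analysis.Analysis"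
begin

text \<open>Vectors in R^A are functions 'a => real vanishing outside the finite set A.\<close>

definition RA :: "'a set \<Rightarrow> ('a \<Rightarrow> real) set" where
  "RA A = {v. \<forall>a. a \<notin> A \<longrightarrow> v a = 0}"

definition sigmaX :: "'a::real_inner set \<Rightarrow> 'a \<Rightarrow> ereal" where
  "sigmaX X y = (SUP x\<in>X. ereal (inner y x))"

definition Amap :: "'a::real_vector set \<Rightarrow> ('a \<Rightarrow> real) \<Rightarrow> 'a" where
  "Amap A v = (\<Sum>a\<in>A. v a *\<^sub>R a)"

definition Nbeta :: "'a set \<Rightarrow> 'a \<Rightarrow> ('a \<Rightarrow> real) set" where
  "Nbeta A b = {v \<in> RA A. (\<forall>a\<in>A. a \<noteq> b \<longrightarrow> v a \<ge> 0) \<and> sum v A = 0}"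

definition proportional :: "('a \<Rightarrow> real) \<Rightarrow> ('a \<Rightarrow> real) \<Rightarrow> bool" where
  "proportional u v \<longleftrightarrow> (\<exists>c. u = (\<lambda>a. c * v a)) \<or> (\<exists>c. v = (\<lambda>a. c * u a))"

definition sigma_affine_on_segment ::
  "'a::real_inner set \<Rightarrow> 'a set \<Rightarrow> ('a \<Rightarrow> real) \<Rightarrow> ('a \<Rightarrow> real) \<Rightarrow> bool" where
  "sigma_affine_on_segment X A v1 v2 \<longleftrightarrow>
     (\<forall>t\<in>{0..1::real}.
        sigmaX X (- Amap A (\<lambda>a. (1 - t) * v1 a + t * v2 a)) =
          ereal (1 - t) * sigmaX X (- Amap A v1) + ereal t * sigmaX X (- Amap A v2))"

definition X_circuit :: "'a::real_inner set \<Rightarrow> 'a set \<Rightarrow> 'a \<Rightarrow> ('a \<Rightarrow> real) \<Rightarrow> bool" where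
  "X_circuit X A b v \<longleftrightarrow>
     b \<in> A \<and> v \<in> Nbeta A b \<and> v \<noteq> (\<lambda>_. 0) \<and>
     sigmaX X (- Amap A v) < \<infinity> \<and>
     \<not> (\<exists>v1\<in>Nbeta A b. \<exists>v2\<in>Nbeta A b. \<not> proportional v1 v2 \<and>
          (\<exists>\<theta>::real. 0 < \<theta> \<and> \<theta> < 1 \<and> v = (\<lambda>a. \<theta> * v1 a + (1 - \<theta>) * v2 a)) \<and>
          sigma_affine_on_segment X A v1 v2)"

definition Lambda_X :: "'a::real_inner set \<Rightarrow> 'a set \<Rightarrow> ('a \<Rightarrow> real) set" where
  "Lambda_X X A = {l. \<exists>b\<in>A. X_circuit X A b l \<and> l b = -1}"

definition phi :: "'a::real_inner set \<Rightarrow> 'a set \<Rightarrow> ('a \<Rightarrow> real) \<Rightarrow> ('a \<Rightarrow> real) \<Rightarrow> real" where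
  "phi X A l y = (\<Sum>a\<in>A. y a * l a) + real_of_ereal (sigmaX X (- Amap A l))"

definition phi_vec :: "'a::real_inner set \<Rightarrow> 'a set \<Rightarrow> ('a \<Rightarrow> real) \<Rightarrow> ('a \<Rightarrow> real) \<times> real" where
  "phi_vec X A l = (l, real_of_ereal (sigmaX X (- Amap A l)))"

definition circuit_graph :: "'a::real_inner set \<Rightarrow> 'a set \<Rightarrow> (('a \<Rightarrow> real) \<times> real) set" where
  "circuit_graph X A =
     {p. \<exists>S c c0. finite S \<and> S \<subseteq> Lambda_X X A \<and> (\<forall>s\<in>S. c s \<ge> (0::real)) \<and> c0 \<ge> (0::real) \<and>
        p = ((\<lambda>a. \<Sum>s\<in>S. c s * fst (phi_vec X A s) a),
             (\<Sum>s\<in>S. c s * snd (phi_vec X A s)) + c0)}"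

definition ray :: "('a \<Rightarrow> real) \<times> real \<Rightarrow> (('a \<Rightarrow> real) \<times> real) set" where
  "ray p = {((\<lambda>a. t * fst p a), t * snd p) | t. t \<ge> (0::real)}"

definition padd :: "('a \<Rightarrow> real) \<times> real \<Rightarrow> ('a \<Rightarrow> real) \<times> real \<Rightarrow> ('a \<Rightarrow> real) \<times> real" where
  "padd u v = ((\<lambda>a. fst u a + fst v a), snd u + snd v)"

definition extreme_ray :: "(('a \<Rightarrow> real) \<times> real) set \<Rightarrow> (('a \<Rightarrow> real) \<times> real) set \<Rightarrow> bool" where
  "extreme_ray R G \<longleftrightarrow> R \<subseteq> G \<and> (\<exists>r\<in>R. r \<noteq> ((\<lambda>_. 0), 0)) \<and>
     (\<forall>u\<in>G. \<forall>v\<in>G. padd u v \<in> R \<longrightarrow> u \<in> R \<and> v \<in> R)"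

definition Lambda_star :: "'a::real_inner set \<Rightarrow> 'a set \<Rightarrow> ('a \<Rightarrow> real) set" where
  "Lambda_star X A = {l \<in> Lambda_X X A. extreme_ray (ray (phi_vec X A l)) (circuit_graph X A)}"

definition exp_lin_indep :: "'a::real_inner set \<Rightarrow> 'a set \<Rightarrow> bool" where
  "exp_lin_indep X A \<longleftrightarrow>
     (\<forall>c. (\<forall>x\<in>X. (\<Sum>a\<in>A. c a * exp (inner a x)) = 0) \<longrightarrow> (\<forall>a\<in>A. c a = 0))"

end

theory Submission
  imports Defs
begin

text \<open>Since \<open>X\<close> is a polyhedron, its support function is piecewise linear: a dual certificate
  for \<open>\<sigma>\<^sub>X(-\<A>\<lambda>)\<close> remains valid when \<open>\<lambda>\<close> moves in a direction that keeps the certificate inside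
  the same face of the normal cone. Hence two normalized \<open>X\<close>-circuits with the same negative index,
  the same zero pattern and certificates of the same support coincide, for otherwise the first
  would be the midpoint of a segment on which \<open>\<nu> \<mapsto> \<sigma>\<^sub>X(-\<A>\<nu>)\<close> is affine. So \<open>\<Lambda>\<^sub>X(\<A>)\<close> is finite.
  For \<open>\<lambda> \<in> \<Lambda>\<^sup>\<star>\<^sub>X(\<A>) - \<Lambda>\<close>, extremality of the ray through \<open>\<phi>\<^sub>\<lambda>\<close> shows that \<open>\<phi>\<^sub>\<lambda>\<close> is not in the
  finitely generated cone spanned by \<open>(0, 1)\<close> and the \<open>\<phi>\<^sub>\<lambda>\<^sub>'\<close>, \<open>\<lambda>' \<in> \<Lambda>\<close>, and Farkas' lemma separates
  them. Adding a small multiple of \<open>(x\<^sub>0, 1)\<close> with \<open>x\<^sub>0 \<in> X\<close> makes the last coordinate of the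
  separating functional positive; dividing by it gives \<open>y\<close>. Besides polyhedrality only
  \<open>X \<noteq> {}\<close> and the finiteness of \<open>\<A>\<close> are used.\<close>

section \<open>Farkas' lemma\<close>

definition nonneg_combination :: "'i set \<Rightarrow> ('i \<Rightarrow> 'j \<Rightarrow> real) \<Rightarrow> 'j set \<Rightarrow> ('j \<Rightarrow> real) \<Rightarrow> bool" where
  "nonneg_combination I v J w \<longleftrightarrow> (\<exists>c. (\<forall>i\<in>I. 0 \<le> c i) \<and> (\<forall>j\<in>J. w j = (\<Sum>i\<in>I. c i * v i j)))"

lemma nonneg_combination_insert:
  assumes "finite I" "m \<notin> I" "nonneg_combination I v J w"
  shows "nonneg_combination (insert m I) v J w"
proof -
  obtain c where c: "\<forall>i\<in>I. 0 \<le> c i" "\<forall>j\<in>J. w j = (\<Sum>i\<in>I. c i * v i j)"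
    using assms(3) by (auto simp: nonneg_combination_def)
  have "(\<Sum>i\<in>insert m I. (c(m := 0)) i * v i j) = (\<Sum>i\<in>I. c i * v i j)" for j
    using assms(1,2) by (auto intro!: sum.cong)
  then show ?thesis
    using c unfolding nonneg_combination_def by (intro exI[of _ "c(m := 0)"]) auto
qed

text \<open>Fourier--Motzkin elimination of the generator \<open>v m\<close>: every \<open>v i\<close> and \<open>w\<close> is
  replaced by its combination with \<open>v m\<close> that is annihilated by \<open>y\<close>.\<close>

lemma fourier_motzkin_eliminate:
  fixes v :: "'i \<Rightarrow> 'j \<Rightarrow> real"
  assumes "finite I" "m \<notin> I"
    and s: "\<And>i. s i = (\<Sum>j\<in>J. y j * v i j)" and "\<forall>i\<in>I. 0 \<le> s i" and "s m < 0"
    and yw: "yw = (\<Sum>j\<in>J. y j * w j)" "yw < 0"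
    and "\<not> nonneg_combination (insert m I) v J w"
  shows "\<not> nonneg_combination I (\<lambda>i j. s i * v m j - s m * v i j) J (\<lambda>j. yw * v m j - s m * w j)"
proof
  assume "nonneg_combination I (\<lambda>i j. s i * v m j - s m * v i j) J (\<lambda>j. yw * v m j - s m * w j)"
  then obtain c where c0: "\<forall>i\<in>I. 0 \<le> c i"
    and c: "\<forall>j\<in>J. yw * v m j - s m * w j = (\<Sum>i\<in>I. c i * (s i * v m j - s m * v i j))"
    by (auto simp: nonneg_combination_def)
  define cs where "cs = (\<Sum>i\<in>I. c i * s i)"
  have "0 \<le> cs"
    unfolding cs_def using c0 assms(4) by (auto intro!: sum_nonneg)
  define c' where "c' = c(m := (cs - yw) / (- s m))"
  have "\<forall>i\<in>insert m I. 0 \<le> c' i"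
    using c0 \<open>0 \<le> cs\<close> assms(5,7) by (auto simp: c'_def intro!: divide_nonneg_neg)
  moreover have "\<forall>j\<in>J. w j = (\<Sum>i\<in>insert m I. c' i * v i j)"
  proof
    fix j assume "j \<in> J"
    have "(\<Sum>i\<in>I. c i * (s i * v m j - s m * v i j)) = cs * v m j - s m * (\<Sum>i\<in>I. c i * v i j)"
      by (simp add: cs_def algebra_simps sum_subtractf sum_distrib_left sum_distrib_right)
    with c \<open>j \<in> J\<close> have "w j = (cs - yw) / (- s m) * v m j + (\<Sum>i\<in>I. c i * v i j)"
      using assms(5) by (auto simp: field_simps)
    also have "(\<Sum>i\<in>I. c i * v i j) = (\<Sum>i\<in>I. c' i * v i j)"
      using assms(2) by (intro sum.cong) (auto simp: c'_def)
    finally show "w j = (\<Sum>i\<in>insert m I. c' i * v i j)"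
      using assms(1,2) by (simp add: c'_def)
  qed
  ultimately show False
    using assms(8) by (auto simp: nonneg_combination_def)
qed

lemma fourier_motzkin_lift:
  fixes v :: "'i \<Rightarrow> 'j \<Rightarrow> real"
  assumes s: "\<And>i. s i = (\<Sum>j\<in>J. y j * v i j)" and "\<forall>i\<in>I. 0 \<le> s i" and "s m < 0"
    and yw: "yw = (\<Sum>j\<in>J. y j * w j)"
    and y': "\<forall>i\<in>I. 0 \<le> (\<Sum>j\<in>J. y' j * (s i * v m j - s m * v i j))"
      "(\<Sum>j\<in>J. y' j * (yw * v m j - s m * w j)) < 0"
  shows "\<exists>z. (\<forall>i\<in>insert m I. 0 \<le> (\<Sum>j\<in>J. z j * v i j)) \<and> (\<Sum>j\<in>J. z j * w j) < 0"
proof -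
  define t where "t = (\<Sum>j\<in>J. y' j * v m j)"
  define z where "z j = t * y j - s m * y' j" for j
  have z: "(\<Sum>j\<in>J. z j * u j) = t * (\<Sum>j\<in>J. y j * u j) - s m * (\<Sum>j\<in>J. y' j * u j)" for u
    by (simp add: z_def algebra_simps sum_subtractf sum_distrib_left)
  have y'_lin: "(\<Sum>j\<in>J. y' j * (p * v m j - q * u j)) = p * t - q * (\<Sum>j\<in>J. y' j * u j)" for p q u
    by (simp add: t_def algebra_simps sum_subtractf sum_distrib_left)
  have "0 \<le> (\<Sum>j\<in>J. z j * v i j)" if "i \<in> insert m I" for i
    using that
  proof
    assume "i = m"
    then show ?thesis by (simp add: z s[symmetric] t_def)
  next
    assume "i \<in> I"
    then show ?thesis using y'(1) by (simp add: z y'_lin s[symmetric] mult.commute)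
  qed
  moreover have "(\<Sum>j\<in>J. z j * w j) = (\<Sum>j\<in>J. y' j * (yw * v m j - s m * w j))"
    unfolding z y'_lin yw by (simp add: mult.commute)
  then have "(\<Sum>j\<in>J. z j * w j) < 0"
    using y'(2) by simp
  ultimately show ?thesis by blast
qed

lemma farkas_coordinates:
  fixes v :: "'i \<Rightarrow> 'j \<Rightarrow> real"
  assumes "finite I" "finite J" "\<not> nonneg_combination I v J w"
  shows "\<exists>y. (\<forall>i\<in>I. 0 \<le> (\<Sum>j\<in>J. y j * v i j)) \<and> (\<Sum>j\<in>J. y j * w j) < 0"
  using assms(1,3)
proof (induction I arbitrary: v w rule: finite_induct)
  case empty
  then obtain j where j: "j \<in> J" "w j \<noteq> 0"
    by (auto simp: nonneg_combination_def)
  have "0 < (\<Sum>j\<in>J. w j * w j)"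
    using j by (intro sum_pos2[OF assms(2) j(1)]) (auto simp: zero_less_mult_iff linorder_neq_iff)
  then show ?case
    by (intro exI[of _ "\<lambda>j. - w j"]) (simp add: sum_negf)
next
  case (insert m I)
  have "\<not> nonneg_combination I v J w"
    using nonneg_combination_insert[OF insert.hyps] insert.prems by blast
  with insert.IH obtain y where
    y: "\<forall>i\<in>I. 0 \<le> (\<Sum>j\<in>J. y j * v i j)" "(\<Sum>j\<in>J. y j * w j) < 0"
    by blast
  define s where "s i = (\<Sum>j\<in>J. y j * v i j)" for i
  define yw where "yw = (\<Sum>j\<in>J. y j * w j)"
  show ?case
  proof (cases "0 \<le> s m")
    case True
    then show ?thesis using y by (auto simp: s_def)
  next
    case False
    have "\<not> nonneg_combination I (\<lambda>i j. s i * v m j - s m * v i j) J (\<lambda>j. yw * v m j - s m * w j)"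
      using False y insert.hyps insert.prems
      by (intro fourier_motzkin_eliminate[where y = y and s = s and yw = yw]) (auto simp: s_def yw_def)
    with insert.IH obtain y' where
      "\<forall>i\<in>I. 0 \<le> (\<Sum>j\<in>J. y' j * (s i * v m j - s m * v i j))"
      "(\<Sum>j\<in>J. y' j * (yw * v m j - s m * w j)) < 0"
      by blast
    then show ?thesis
      using False y by (intro fourier_motzkin_lift[where y = y and s = s and yw = yw]) (auto simp: s_def yw_def)
  qed
qed

lemma farkas_euclidean:
  fixes q :: "'k \<Rightarrow> 'b::euclidean_space"
  assumes "finite K" and "\<not> (\<exists>c. (\<forall>k\<in>K. 0 \<le> c k) \<and> p = (\<Sum>k\<in>K. c k *\<^sub>R q k))"
  shows "\<exists>y. (\<forall>k\<in>K. 0 \<le> y \<bullet> q k) \<and> y \<bullet> p < 0"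
proof -
  have "\<not> nonneg_combination K (\<lambda>k j. q k \<bullet> j) Basis (\<lambda>j. p \<bullet> j)"
  proof
    assume "nonneg_combination K (\<lambda>k j. q k \<bullet> j) Basis (\<lambda>j. p \<bullet> j)"
    then obtain c where "\<forall>k\<in>K. 0 \<le> c k" "\<forall>j\<in>Basis. p \<bullet> j = (\<Sum>k\<in>K. c k * (q k \<bullet> j))"
      by (auto simp: nonneg_combination_def)
    moreover from this(2) have "p = (\<Sum>k\<in>K. c k *\<^sub>R q k)"
      by (auto intro: euclidean_eqI simp: inner_sum_left)
    ultimately show False
      using assms(2) by blast
  qed
  from farkas_coordinates[OF assms(1) finite_Basis this] obtain y where
    y: "\<forall>k\<in>K. 0 \<le> (\<Sum>j\<in>Basis. y j * (q k \<bullet> j))" "(\<Sum>j\<in>Basis. y j * (p \<bullet> j)) < 0"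
    by blast
  define Y where "Y = (\<Sum>j\<in>Basis. y j *\<^sub>R j)"
  have "Y \<bullet> u = (\<Sum>j\<in>Basis. y j * (u \<bullet> j))" for u
    unfolding Y_def inner_sum_left by (simp add: inner_commute)
  with y show ?thesis
    by (intro exI[of _ Y]) simp
qed

lemma sum_insert_None:
  "finite F \<Longrightarrow> (\<Sum>k\<in>insert None (Some ` F). g k) = g None + (\<Sum>h\<in>F. g (Some h))"
  by (simp add: sum.reindex)

lemma farkas_pairs:
  fixes aa :: "'h \<Rightarrow> 'a::euclidean_space"
  assumes "finite F"
    and "\<not> (\<exists>c0 \<mu>. 0 \<le> c0 \<and> (\<forall>h\<in>F. 0 \<le> \<mu> h) \<and>
            p = c0 *\<^sub>R g + (\<Sum>h\<in>F. \<mu> h *\<^sub>R aa h) \<and> r = c0 * e + (\<Sum>h\<in>F. \<mu> h * bb h))"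
  shows "\<exists>Y t. 0 \<le> Y \<bullet> g + t * e \<and> (\<forall>h\<in>F. 0 \<le> Y \<bullet> aa h + t * bb h) \<and> Y \<bullet> p + t * r < 0"
proof -
  define q where "q k = (case k of None \<Rightarrow> (g, e) | Some h \<Rightarrow> (aa h, bb h))" for k
  let ?K = "insert None (Some ` F)"
  have "\<not> (\<exists>c. (\<forall>k\<in>?K. 0 \<le> c k) \<and> (p, r) = (\<Sum>k\<in>?K. c k *\<^sub>R q k))"
  proof clarify
    fix c assume "\<forall>k\<in>?K. 0 \<le> c k" "(p, r) = (\<Sum>k\<in>?K. c k *\<^sub>R q k)"
    moreover from this(2) have "(p, r) = c None *\<^sub>R (g, e) + (\<Sum>h\<in>F. c (Some h) *\<^sub>R (aa h, bb h))"
      by (simp add: sum_insert_None[OF assms(1)] q_def)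
    then have "p = c None *\<^sub>R g + (\<Sum>h\<in>F. c (Some h) *\<^sub>R aa h)"
      "r = c None * e + (\<Sum>h\<in>F. c (Some h) * bb h)"
      by (simp_all add: prod_eq_iff fst_sum snd_sum)
    ultimately show False
      using assms(2) by (auto simp only: not_ex dest!: spec[of _ "c None"] spec[of _ "\<lambda>h. c (Some h)"])
  qed
  moreover have "finite ?K"
    using assms(1) by simp
  ultimately obtain y where y: "\<forall>k\<in>?K. 0 \<le> y \<bullet> q k" "y \<bullet> (p, r) < 0"
    using farkas_euclidean by blast
  obtain Y t where "y = (Y, t)"
    by fastforce
  with y show ?thesis
    by (intro exI[of _ Y] exI[of _ t]) (simp add: q_def)
qed

lemma farkas_RA_times_real:
  fixes q :: "'k \<Rightarrow> ('a \<Rightarrow> real) \<times> real"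
  assumes "finite A" and "finite K"
    and "\<not> (\<exists>c c0. (\<forall>k\<in>K. 0 \<le> c k) \<and> 0 \<le> c0 \<and>
            (\<forall>a\<in>A. fst p a = (\<Sum>k\<in>K. c k * fst (q k) a)) \<and> snd p = (\<Sum>k\<in>K. c k * snd (q k)) + c0)"
  shows "\<exists>y t. 0 \<le> t \<and> (\<forall>k\<in>K. 0 \<le> (\<Sum>a\<in>A. y a * fst (q k) a) + t * snd (q k)) \<and>
           (\<Sum>a\<in>A. y a * fst p a) + t * snd p < 0"
proof -
  define coord where "coord u j = (case j of None \<Rightarrow> snd u | Some a \<Rightarrow> fst u a)"
    for u :: "('a \<Rightarrow> real) \<times> real" and j
  define gen where "gen i = (case i of None \<Rightarrow> ((\<lambda>_. 0), 1) | Some k \<Rightarrow> q k)" for i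
  let ?I = "insert None (Some ` K)" and ?J = "insert None (Some ` A)"
  have pairing: "(\<Sum>j\<in>?J. y j * coord u j) = (\<Sum>a\<in>A. y (Some a) * fst u a) + y None * snd u" for y u
    by (simp add: sum_insert_None[OF assms(1)] coord_def)
  have "\<not> nonneg_combination ?I (\<lambda>i. coord (gen i)) ?J (coord p)"
  proof
    assume "nonneg_combination ?I (\<lambda>i. coord (gen i)) ?J (coord p)"
    then obtain c where c: "\<forall>i\<in>?I. 0 \<le> c i" "\<forall>j\<in>?J. coord p j = (\<Sum>i\<in>?I. c i * coord (gen i) j)"
      by (auto simp: nonneg_combination_def)
    have "\<forall>a\<in>A. fst p a = (\<Sum>k\<in>K. c (Some k) * fst (q k) a)"
      using c(2) by (auto simp: sum_insert_None[OF assms(2)] coord_def gen_def)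
    moreover have "snd p = (\<Sum>k\<in>K. c (Some k) * snd (q k)) + c None"
      using c(2)[rule_format, of None] by (simp add: sum_insert_None[OF assms(2)] coord_def gen_def)
    moreover have "\<forall>k\<in>K. 0 \<le> c (Some k)" "0 \<le> c None"
      using c(1) by auto
    ultimately show False
      using assms(3) by (auto simp only: not_ex dest!: spec[of _ "\<lambda>k. c (Some k)"] spec[of _ "c None"])
  qed
  from farkas_coordinates[OF _ _ this] obtain y where
    y: "\<forall>i\<in>?I. 0 \<le> (\<Sum>j\<in>?J. y j * coord (gen i) j)" "(\<Sum>j\<in>?J. y j * coord p j) < 0"
    using assms(1,2) by blast
  moreover have "0 \<le> y None"
    using y(1)[rule_format, of None] by (simp add: pairing gen_def)
  ultimately show ?thesis
    by (intro exI[of _ "\<lambda>a. y (Some a)"] exI[of _ "y None"]) (simp add: pairing gen_def)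
qed

section \<open>Support functions of polyhedra\<close>

lemma sigmaX_upper: "x \<in> X \<Longrightarrow> ereal (z \<bullet> x) \<le> sigmaX X z"
  unfolding sigmaX_def by (rule SUP_upper)

lemma sigmaX_finite:
  assumes "X \<noteq> {}" and "sigmaX X z < \<infinity>"
  obtains s where "sigmaX X z = ereal s" "\<forall>x\<in>X. z \<bullet> x \<le> s" "\<forall>\<epsilon>>0. \<exists>x\<in>X. s - \<epsilon> < z \<bullet> x"
proof -
  obtain x0 where "x0 \<in> X" using assms(1) by blast
  then have "sigmaX X z \<noteq> -\<infinity>"
    using sigmaX_upper[of x0 X z] by auto
  then obtain s where s: "sigmaX X z = ereal s"
    using assms(2) by (cases "sigmaX X z") auto
  moreover have "\<forall>x\<in>X. z \<bullet> x \<le> s"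
    using sigmaX_upper[of _ X z] s by auto
  moreover have "\<exists>x\<in>X. s - \<epsilon> < z \<bullet> x" if "0 < \<epsilon>" for \<epsilon>
  proof -
    have "ereal (s - \<epsilon>) < (SUP x\<in>X. ereal (z \<bullet> x))"
      using s that by (simp add: sigmaX_def)
    then show ?thesis by (auto simp: less_SUP_iff)
  qed
  ultimately show ?thesis using that by blast
qed

lemma polyhedron_sup_attained:
  fixes aa :: "'h \<Rightarrow> 'a::euclidean_space"
  assumes F: "finite F" and X: "X = {x. \<forall>h\<in>F. aa h \<bullet> x \<le> bb h}" and "X \<noteq> {}"
    and ub: "\<forall>x\<in>X. z \<bullet> x \<le> s" and approx: "\<forall>\<epsilon>>0. \<exists>x\<in>X. s - \<epsilon> < z \<bullet> x"
  shows "\<exists>x\<in>X. z \<bullet> x = s"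
proof (rule ccontr)
  assume not_attained: "\<not> (\<exists>x\<in>X. z \<bullet> x = s)"
  have "\<not> (\<exists>c0 \<mu>. 0 \<le> c0 \<and> (\<forall>h\<in>F. 0 \<le> \<mu> h) \<and>
            0 = c0 *\<^sub>R (- z) + (\<Sum>h\<in>F. \<mu> h *\<^sub>R aa h) \<and> -1 = c0 * (- s) + (\<Sum>h\<in>F. \<mu> h * bb h))"
  proof clarify
    fix c0 \<mu> assume c0: "0 \<le> c0" and \<mu>: "\<forall>h\<in>F. 0 \<le> \<mu> h"
      and z: "0 = c0 *\<^sub>R (- z) + (\<Sum>h\<in>F. \<mu> h *\<^sub>R aa h)" and s: "-1 = c0 * (- s) + (\<Sum>h\<in>F. \<mu> h * bb h)"
    have z': "c0 *\<^sub>R z = (\<Sum>h\<in>F. \<mu> h *\<^sub>R aa h)"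
      using z by (simp add: eq_neg_iff_add_eq_0 add.commute)
    have bound: "c0 * (z \<bullet> x) \<le> c0 * s - 1" if "x \<in> X" for x
    proof -
      have "c0 * (z \<bullet> x) = (c0 *\<^sub>R z) \<bullet> x" by simp
      also have "\<dots> = (\<Sum>h\<in>F. \<mu> h * (aa h \<bullet> x))"
        unfolding z' by (simp add: inner_sum_left)
      also have "\<dots> \<le> (\<Sum>h\<in>F. \<mu> h * bb h)"
        using that \<mu> X by (intro sum_mono mult_left_mono) auto
      finally show ?thesis using s by simp
    qed
    obtain x0 where "x0 \<in> X"
      using \<open>X \<noteq> {}\<close> by blast
    show False
    proof (cases "c0 = 0")
      case True
      then show False using bound[OF \<open>x0 \<in> X\<close>] by simp
    next
      case False
      with c0 have "0 < c0" by simp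
      then obtain x where "x \<in> X" "s - 1 / c0 < z \<bullet> x"
        using approx[rule_format, of "1 / c0"] by auto
      moreover have "z \<bullet> x \<le> s - 1 / c0"
        using bound[OF \<open>x \<in> X\<close>] \<open>0 < c0\<close> by (simp add: field_simps)
      ultimately show False by simp
    qed
  qed
  from farkas_pairs[OF F this] obtain Y t where
    Yt: "0 \<le> Y \<bullet> (- z) + t * (- s)" "\<forall>h\<in>F. 0 \<le> Y \<bullet> aa h + t * bb h" "t * (-1) < 0"
    by auto
  then have "0 < t" by simp
  define x where "x = - (1 / t) *\<^sub>R Y"
  have "aa h \<bullet> x \<le> bb h" if "h \<in> F" for h
    using Yt(2)[rule_format, OF that] \<open>0 < t\<close> by (simp add: x_def inner_commute field_simps)
  then have "x \<in> X"
    using X by auto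
  moreover have "s \<le> z \<bullet> x"
    using Yt(1) \<open>0 < t\<close> by (simp add: x_def inner_commute field_simps)
  ultimately show False
    using not_attained ub by force
qed

text \<open>Complementary slackness: the multipliers \<open>\<mu>\<close> certify that \<open>xs\<close> maximizes \<open>z \<bullet> x\<close> over
  \<open>{x. \<forall>h\<in>F. aa h \<bullet> x \<le> bb h}\<close>.\<close>

definition dual_certificate ::
  "'h set \<Rightarrow> ('h \<Rightarrow> 'a::real_inner) \<Rightarrow> ('h \<Rightarrow> real) \<Rightarrow> 'a \<Rightarrow> ('h \<Rightarrow> real) \<Rightarrow> 'a \<Rightarrow> bool" where
  "dual_certificate F aa bb xs \<mu> z \<longleftrightarrow>
     (\<forall>h\<in>F. 0 \<le> \<mu> h) \<and> z = (\<Sum>h\<in>F. \<mu> h *\<^sub>R aa h) \<and> (\<forall>h\<in>F. \<mu> h \<noteq> 0 \<longrightarrow> aa h \<bullet> xs = bb h)"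

lemma dual_certificate_of_dual_feasible:
  fixes aa :: "'h \<Rightarrow> 'a::euclidean_space"
  assumes F: "finite F" and X: "X = {x. \<forall>h\<in>F. aa h \<bullet> x \<le> bb h}" and "xs \<in> X"
    and \<mu>: "\<forall>h\<in>F. 0 \<le> \<mu> h" and z: "z = (\<Sum>h\<in>F. \<mu> h *\<^sub>R aa h)"
    and "0 \<le> c0" and zxs: "z \<bullet> xs = c0 + (\<Sum>h\<in>F. \<mu> h * bb h)"
  shows "dual_certificate F aa bb xs \<mu> z"
proof -
  have slack_nonneg: "\<forall>h\<in>F. 0 \<le> \<mu> h * (bb h - aa h \<bullet> xs)"
    using \<mu> \<open>xs \<in> X\<close> X by auto
  have "(\<Sum>h\<in>F. \<mu> h * (bb h - aa h \<bullet> xs)) = - c0"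
    using zxs by (simp add: z inner_sum_left right_diff_distrib sum_subtractf)
  moreover have "0 \<le> (\<Sum>h\<in>F. \<mu> h * (bb h - aa h \<bullet> xs))"
    using slack_nonneg by (simp add: sum_nonneg)
  ultimately have "(\<Sum>h\<in>F. \<mu> h * (bb h - aa h \<bullet> xs)) = 0"
    using \<open>0 \<le> c0\<close> by linarith
  then have "\<forall>h\<in>F. \<mu> h * (bb h - aa h \<bullet> xs) = 0"
    using slack_nonneg by (subst (asm) sum_nonneg_eq_0_iff[OF F]) auto
  then have "\<forall>h\<in>F. \<mu> h \<noteq> 0 \<longrightarrow> aa h \<bullet> xs = bb h"
    by auto
  with \<mu> z show ?thesis
    unfolding dual_certificate_def by blast
qed

lemma polyhedron_improving_point:
  fixes aa :: "'h \<Rightarrow> 'a::euclidean_space"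
  assumes X: "X = {x. \<forall>h\<in>F. aa h \<bullet> x \<le> bb h}" and "xs \<in> X" and "0 \<le> t"
    and Yt: "\<forall>h\<in>F. 0 \<le> Y \<bullet> aa h + t * bb h" "Y \<bullet> z + t * (z \<bullet> xs) < 0"
  shows "\<exists>x\<in>X. z \<bullet> xs < z \<bullet> x"
proof -
  define x where "x = (1 / (1 + t)) *\<^sub>R (xs - Y)"
  have "aa h \<bullet> x \<le> bb h" if "h \<in> F" for h
  proof -
    have "aa h \<bullet> xs \<le> bb h" "0 \<le> aa h \<bullet> Y + t * bb h"
      using Yt(1) that \<open>xs \<in> X\<close> X by (auto simp: inner_commute)
    then have "aa h \<bullet> xs - aa h \<bullet> Y \<le> bb h * (1 + t)"
      by (simp add: algebra_simps)
    then show ?thesis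
      using \<open>0 \<le> t\<close> by (simp add: x_def inner_diff_right pos_divide_le_eq)
  qed
  then have "x \<in> X"
    using X by auto
  moreover have "z \<bullet> xs < z \<bullet> x"
  proof -
    have "z \<bullet> xs * (1 + t) < z \<bullet> xs - z \<bullet> Y"
      using Yt(2) by (simp add: inner_commute[of Y] algebra_simps)
    then show ?thesis
      using \<open>0 \<le> t\<close> by (simp add: x_def inner_diff_right pos_less_divide_eq)
  qed
  ultimately show ?thesis
    by blast
qed

lemma polyhedron_maximizer_dual:
  fixes aa :: "'h \<Rightarrow> 'a::euclidean_space"
  assumes F: "finite F" and X: "X = {x. \<forall>h\<in>F. aa h \<bullet> x \<le> bb h}"
    and "xs \<in> X" and max: "\<forall>x\<in>X. z \<bullet> x \<le> z \<bullet> xs"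
  shows "\<exists>\<mu>. dual_certificate F aa bb xs \<mu> z"
proof (cases "\<exists>c0 \<mu>. 0 \<le> c0 \<and> (\<forall>h\<in>F. 0 \<le> \<mu> h) \<and>
    z = c0 *\<^sub>R 0 + (\<Sum>h\<in>F. \<mu> h *\<^sub>R aa h) \<and> z \<bullet> xs = c0 * 1 + (\<Sum>h\<in>F. \<mu> h * bb h)")
  case True
  then obtain c0 \<mu> where "0 \<le> c0" "\<forall>h\<in>F. 0 \<le> \<mu> h"
    "z = (\<Sum>h\<in>F. \<mu> h *\<^sub>R aa h)" "z \<bullet> xs = c0 + (\<Sum>h\<in>F. \<mu> h * bb h)"
    by auto
  then show ?thesis
    using dual_certificate_of_dual_feasible[OF F X \<open>xs \<in> X\<close>] by blast
next
  case False
  from farkas_pairs[OF F False] obtain Y t where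
    "0 \<le> Y \<bullet> 0 + t * 1" and
    Yt: "\<forall>h\<in>F. 0 \<le> Y \<bullet> aa h + t * bb h" "Y \<bullet> z + t * (z \<bullet> xs) < 0"
    by blast
  then have "0 \<le> t"
    by simp
  with polyhedron_improving_point[OF X \<open>xs \<in> X\<close> _ Yt] max show ?thesis
    by force
qed

lemma sigmaX_dual_certificate:
  fixes aa :: "'h \<Rightarrow> 'a::euclidean_space"
  assumes "finite F" and "X = {x. \<forall>h\<in>F. aa h \<bullet> x \<le> bb h}" and "X \<noteq> {}"
    and "sigmaX X z < \<infinity>"
  shows "\<exists>xs\<in>X. \<exists>\<mu>. dual_certificate F aa bb xs \<mu> z"
proof -
  obtain s where "sigmaX X z = ereal s"
    and s: "\<forall>x\<in>X. z \<bullet> x \<le> s" "\<forall>\<epsilon>>0. \<exists>x\<in>X. s - \<epsilon> < z \<bullet> x"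
    by (rule sigmaX_finite[OF assms(3,4)])
  obtain xs where xs: "xs \<in> X" "z \<bullet> xs = s"
    using polyhedron_sup_attained[OF assms(1-3) s] by blast
  with s(1) have "\<forall>x\<in>X. z \<bullet> x \<le> z \<bullet> xs"
    by simp
  with polyhedron_maximizer_dual[OF assms(1,2) xs(1)] xs(1) show ?thesis
    by blast
qed

lemma sigmaX_eq_dual_certificate:
  fixes aa :: "'h \<Rightarrow> 'a::euclidean_space"
  assumes X: "X = {x. \<forall>h\<in>F. aa h \<bullet> x \<le> bb h}" and "xs \<in> X"
    and "dual_certificate F aa bb xs \<mu> z"
  shows "sigmaX X z = ereal (\<Sum>h\<in>F. \<mu> h * bb h)"
proof (rule antisym)
  have \<mu>: "\<forall>h\<in>F. 0 \<le> \<mu> h" and z: "z = (\<Sum>h\<in>F. \<mu> h *\<^sub>R aa h)"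
    and slack: "\<forall>h\<in>F. \<mu> h \<noteq> 0 \<longrightarrow> aa h \<bullet> xs = bb h"
    using assms(3) by (simp_all add: dual_certificate_def)
  have "z \<bullet> x \<le> (\<Sum>h\<in>F. \<mu> h * bb h)" if "x \<in> X" for x
    unfolding z inner_sum_left using that \<mu> X by (auto intro!: sum_mono mult_left_mono)
  then show "sigmaX X z \<le> ereal (\<Sum>h\<in>F. \<mu> h * bb h)"
    unfolding sigmaX_def by (simp add: SUP_least)
  have "z \<bullet> xs = (\<Sum>h\<in>F. \<mu> h * bb h)"
    unfolding z inner_sum_left using slack by (auto intro!: sum.cong)
  then show "ereal (\<Sum>h\<in>F. \<mu> h * bb h) \<le> sigmaX X z"
    using sigmaX_upper[OF \<open>xs \<in> X\<close>, of z] by simp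
qed

lemma nonneg_perturbation:
  fixes p q :: "'s \<Rightarrow> real"
  assumes "finite S" and "\<forall>s\<in>S. 0 \<le> p s" and "\<forall>s\<in>S. p s = 0 \<longrightarrow> q s = 0"
  shows "\<exists>\<epsilon>>0. \<forall>r. \<bar>r\<bar> \<le> \<epsilon> \<longrightarrow> (\<forall>s\<in>S. 0 \<le> p s + r * q s)"
  using assms
proof (induction S rule: finite_induct)
  case empty
  show ?case by (intro exI[of _ 1]) simp
next
  case (insert x S)
  then obtain \<epsilon> where \<epsilon>: "0 < \<epsilon>" "\<forall>r. \<bar>r\<bar> \<le> \<epsilon> \<longrightarrow> (\<forall>s\<in>S. 0 \<le> p s + r * q s)"
    by auto
  define \<epsilon>' where "\<epsilon>' = (if p x = 0 then \<epsilon> else min \<epsilon> (p x / (\<bar>q x\<bar> + 1)))"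
  have "0 \<le> p x + r * q x" if r: "\<bar>r\<bar> \<le> \<epsilon>'" for r
  proof (cases "p x = 0")
    case True
    then show ?thesis using insert.prems by simp
  next
    case False
    have "\<bar>r * q x\<bar> \<le> p x / (\<bar>q x\<bar> + 1) * \<bar>q x\<bar>"
      unfolding abs_mult using r False by (intro mult_right_mono) (auto simp: \<epsilon>'_def)
    also have "\<dots> \<le> p x"
      using insert.prems by (simp add: field_simps)
    finally show ?thesis by linarith
  qed
  moreover have "0 < \<epsilon>'"
    using \<epsilon>(1) insert.prems by (cases "p x = 0") (auto simp: \<epsilon>'_def)
  moreover have "\<forall>r. \<bar>r\<bar> \<le> \<epsilon>' \<longrightarrow> (\<forall>s\<in>S. 0 \<le> p s + r * q s)"
    using \<epsilon>(2) by (auto simp: \<epsilon>'_def)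
  ultimately show ?case
    by (intro exI[of _ \<epsilon>']) auto
qed

lemma sigmaX_affine_along_face:
  fixes aa :: "'h \<Rightarrow> 'a::euclidean_space"
  assumes F: "finite F" and X: "X = {x. \<forall>h\<in>F. aa h \<bullet> x \<le> bb h}" and "xs \<in> X"
    and cert: "dual_certificate F aa bb xs \<mu> z"
    and z': "z' = (\<Sum>h\<in>F. \<mu>' h *\<^sub>R aa h)" and face: "\<forall>h\<in>F. \<mu> h = 0 \<longrightarrow> \<mu>' h = 0"
  shows "\<exists>\<epsilon>>0. \<forall>r. \<bar>r\<bar> \<le> \<epsilon> \<longrightarrow>
           sigmaX X (z + r *\<^sub>R (z' - z)) = ereal ((\<Sum>h\<in>F. \<mu> h * bb h) + r * (\<Sum>h\<in>F. (\<mu>' h - \<mu> h) * bb h))"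
proof -
  have \<mu>: "\<forall>h\<in>F. 0 \<le> \<mu> h" and z: "z = (\<Sum>h\<in>F. \<mu> h *\<^sub>R aa h)"
    and slack: "\<forall>h\<in>F. \<mu> h \<noteq> 0 \<longrightarrow> aa h \<bullet> xs = bb h"
    using cert by (simp_all add: dual_certificate_def)
  obtain \<epsilon> where "0 < \<epsilon>" and \<epsilon>: "\<forall>r. \<bar>r\<bar> \<le> \<epsilon> \<longrightarrow> (\<forall>h\<in>F. 0 \<le> \<mu> h + r * (\<mu>' h - \<mu> h))"
    using nonneg_perturbation[OF F \<mu>, of "\<lambda>h. \<mu>' h - \<mu> h"] face by auto
  have "sigmaX X (z + r *\<^sub>R (z' - z)) = ereal ((\<Sum>h\<in>F. \<mu> h * bb h) + r * (\<Sum>h\<in>F. (\<mu>' h - \<mu> h) * bb h))"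
    if "\<bar>r\<bar> \<le> \<epsilon>" for r
  proof -
    define m where "m h = \<mu> h + r * (\<mu>' h - \<mu> h)" for h
    have "z + r *\<^sub>R (z' - z) = (\<Sum>h\<in>F. m h *\<^sub>R aa h)"
      unfolding z z' m_def
      by (simp add: algebra_simps scaleR_sum_right sum.distrib sum_subtractf)
    moreover have "\<forall>h\<in>F. m h \<noteq> 0 \<longrightarrow> aa h \<bullet> xs = bb h"
      using slack face by (auto simp: m_def)
    ultimately have "sigmaX X (z + r *\<^sub>R (z' - z)) = ereal (\<Sum>h\<in>F. m h * bb h)"
      using \<epsilon> that by (intro sigmaX_eq_dual_certificate[OF X \<open>xs \<in> X\<close>]) (auto simp: m_def dual_certificate_def)
    also have "(\<Sum>h\<in>F. m h * bb h) = (\<Sum>h\<in>F. \<mu> h * bb h + r * ((\<mu>' h - \<mu> h) * bb h))"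
      by (simp add: m_def algebra_simps)
    also have "\<dots> = (\<Sum>h\<in>F. \<mu> h * bb h) + r * (\<Sum>h\<in>F. (\<mu>' h - \<mu> h) * bb h)"
      by (simp add: sum.distrib sum_distrib_left)
    finally show ?thesis .
  qed
  with \<open>0 < \<epsilon>\<close> show ?thesis
    by blast
qed

lemma polyhedron_halfspaces:
  fixes X :: "'a::euclidean_space set"
  assumes "polyhedron X"
  obtains F and aa :: "'a set \<Rightarrow> 'a" and bb where "finite F" "X = {x. \<forall>h\<in>F. aa h \<bullet> x \<le> bb h}"
proof -
  obtain F where F: "finite F" "X = \<Inter>F" and "\<forall>h\<in>F. \<exists>a b. a \<noteq> 0 \<and> h = {x. a \<bullet> x \<le> b}"
    using assms unfolding polyhedron_def by blast
  then have "\<forall>h\<in>F. \<exists>p. h = {x. fst p \<bullet> x \<le> snd p}"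
    by fastforce
  then obtain p where p: "\<forall>h\<in>F. h = {x. fst (p h) \<bullet> x \<le> snd (p h)}"
    by (metis bchoice)
  have "x \<in> h \<longleftrightarrow> fst (p h) \<bullet> x \<le> snd (p h)" if "h \<in> F" for x h
    using p that by blast
  then have "X = {x. \<forall>h\<in>F. fst (p h) \<bullet> x \<le> snd (p h)}"
    unfolding F(2) by blast
  with F(1) show ?thesis
    by (rule that)
qed

section \<open>Finiteness of the normalized circuits\<close>

lemma Amap_add_scaled: "Amap A (\<lambda>a. l a + r * d a) = Amap A l + r *\<^sub>R Amap A d"
  by (simp add: Amap_def scaleR_add_left sum.distrib scaleR_sum_right)

lemma Amap_diff: "Amap A (\<lambda>a. l a - l' a) = Amap A l - Amap A l'"
  by (simp add: Amap_def scaleR_diff_left sum_subtractf)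

lemma Nbeta_perturbation:
  assumes "finite A" and "l \<in> Nbeta A b" and "l' \<in> Nbeta A b"
    and zeros: "\<forall>a\<in>A. l a = 0 \<longrightarrow> l' a = 0"
  shows "\<exists>\<epsilon>>0. \<forall>r. \<bar>r\<bar> \<le> \<epsilon> \<longrightarrow> (\<lambda>a. l a + r * (l' a - l a)) \<in> Nbeta A b"
proof -
  have "\<forall>a\<in>A - {b}. 0 \<le> l a"
    using assms(2) by (auto simp: Nbeta_def)
  with nonneg_perturbation[of "A - {b}" l "\<lambda>a. l' a - l a"] assms(1) zeros
  obtain \<epsilon> where "0 < \<epsilon>" and \<epsilon>: "\<forall>r. \<bar>r\<bar> \<le> \<epsilon> \<longrightarrow> (\<forall>a\<in>A - {b}. 0 \<le> l a + r * (l' a - l a))"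
    by auto
  have "(\<lambda>a. l a + r * (l' a - l a)) \<in> Nbeta A b" if "\<bar>r\<bar> \<le> \<epsilon>" for r
  proof -
    have "sum (\<lambda>a. l a + r * (l' a - l a)) A = sum l A + r * (sum l' A - sum l A)"
      by (simp add: sum.distrib sum_distrib_left[symmetric] sum_subtractf)
    then show ?thesis
      using assms(2,3) \<epsilon> that by (auto simp: Nbeta_def RA_def)
  qed
  with \<open>0 < \<epsilon>\<close> show ?thesis
    by blast
qed

lemma not_proportional_symmetric_perturbation:
  assumes "l b = -1" and "d b = 0" and "d \<noteq> (\<lambda>_. 0)" and "\<epsilon> \<noteq> 0"
  shows "\<not> proportional (\<lambda>a. l a + \<epsilon> * d a) (\<lambda>a. l a + (- \<epsilon>) * d a)"
proof
  assume "proportional (\<lambda>a. l a + \<epsilon> * d a) (\<lambda>a. l a + (- \<epsilon>) * d a)"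
  then obtain c where "(\<forall>a. l a + \<epsilon> * d a = c * (l a - \<epsilon> * d a)) \<or> (\<forall>a. l a - \<epsilon> * d a = c * (l a + \<epsilon> * d a))"
    unfolding proportional_def by (auto simp: fun_eq_iff)
  moreover from this have "c = 1"
    using assms(1,2) by (auto dest: spec[of _ b])
  ultimately have "\<forall>a. \<epsilon> * d a = 0"
    by auto
  with assms(3,4) show False
    by (auto simp: fun_eq_iff)
qed

lemma sigma_affine_on_symmetric_segment:
  assumes "0 < \<epsilon>"
    and affine: "\<forall>r. \<bar>r\<bar> \<le> \<epsilon> \<longrightarrow> sigmaX X (- Amap A (\<lambda>a. l a + r * d a)) = ereal (S0 + r * S1)"
  shows "sigma_affine_on_segment X A (\<lambda>a. l a + \<epsilon> * d a) (\<lambda>a. l a + (- \<epsilon>) * d a)"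
  unfolding sigma_affine_on_segment_def
proof
  fix t :: real assume "t \<in> {0..1}"
  then have "\<bar>(1 - 2 * t) * \<epsilon>\<bar> \<le> \<epsilon>"
    using \<open>0 < \<epsilon>\<close> by (auto simp: abs_mult intro!: mult_left_le_one_le)
  note mid = affine[rule_format, OF this]
  have "\<bar>\<epsilon>\<bar> \<le> \<epsilon>" "\<bar>- \<epsilon>\<bar> \<le> \<epsilon>"
    using \<open>0 < \<epsilon>\<close> by simp_all
  note ends = affine[rule_format, OF this(1)] affine[rule_format, OF this(2)]
  have segment: "(\<lambda>a. (1 - t) * (l a + \<epsilon> * d a) + t * (l a + (- \<epsilon>) * d a)) =
      (\<lambda>a. l a + ((1 - 2 * t) * \<epsilon>) * d a)"
    by (simp add: fun_eq_iff algebra_simps)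
  show "sigmaX X (- Amap A (\<lambda>a. (1 - t) * (l a + \<epsilon> * d a) + t * (l a + (- \<epsilon>) * d a))) =
      ereal (1 - t) * sigmaX X (- Amap A (\<lambda>a. l a + \<epsilon> * d a)) +
      ereal t * sigmaX X (- Amap A (\<lambda>a. l a + (- \<epsilon>) * d a))"
    unfolding segment mid ends by (simp add: algebra_simps)
qed

lemma X_circuitD:
  assumes "X_circuit X A b l"
  shows "l \<in> Nbeta A b" "sigmaX X (- Amap A l) < \<infinity>"
  using assms by (simp_all add: X_circuit_def)

lemma X_circuit_eq_if_same_face:
  fixes aa :: "'h \<Rightarrow> 'a::euclidean_space"
  assumes F: "finite F" and X: "X = {x. \<forall>h\<in>F. aa h \<bullet> x \<le> bb h}" and "finite A"
    and circ: "X_circuit X A b l" and circ': "X_circuit X A b l'" and "l b = -1" "l' b = -1"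
    and zeros: "\<forall>a\<in>A. l a = 0 \<longrightarrow> l' a = 0"
    and "xs \<in> X" and cert: "dual_certificate F aa bb xs \<mu> (- Amap A l)"
    and cert': "dual_certificate F aa bb xs' \<mu>' (- Amap A l')" and face: "\<forall>h\<in>F. \<mu> h = 0 \<longrightarrow> \<mu>' h = 0"
  shows "l = l'"
proof (rule ccontr)
  assume "l \<noteq> l'"
  define d where "d a = l' a - l a" for a
  define w where "w r = (\<lambda>a. l a + r * d a)" for r
  obtain \<epsilon>1 where "0 < \<epsilon>1" and \<epsilon>1: "\<forall>r. \<bar>r\<bar> \<le> \<epsilon>1 \<longrightarrow> w r \<in> Nbeta A b"
    using Nbeta_perturbation[OF \<open>finite A\<close> X_circuitD(1)[OF circ] X_circuitD(1)[OF circ'] zeros]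
    by (auto simp: w_def d_def)
  define S0 where "S0 = (\<Sum>h\<in>F. \<mu> h * bb h)"
  define S1 where "S1 = (\<Sum>h\<in>F. (\<mu>' h - \<mu> h) * bb h)"
  have Amap_w: "- Amap A (w r) = - Amap A l + r *\<^sub>R (- Amap A l' - - Amap A l)" for r
  proof -
    have "Amap A (w r) = Amap A l + r *\<^sub>R (Amap A l' - Amap A l)"
      unfolding w_def d_def by (simp only: Amap_add_scaled Amap_diff)
    then show ?thesis
      by (simp add: algebra_simps)
  qed
  have "- Amap A l' = (\<Sum>h\<in>F. \<mu>' h *\<^sub>R aa h)"
    using cert' by (simp add: dual_certificate_def)
  from sigmaX_affine_along_face[OF F X \<open>xs \<in> X\<close> cert this face]
  obtain \<epsilon>2 where "0 < \<epsilon>2" and \<epsilon>2: "\<forall>r. \<bar>r\<bar> \<le> \<epsilon>2 \<longrightarrow> sigmaX X (- Amap A (w r)) = ereal (S0 + r * S1)"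
    unfolding Amap_w S0_def S1_def by blast
  define \<epsilon> where "\<epsilon> = min \<epsilon>1 \<epsilon>2"
  have "0 < \<epsilon>"
    using \<open>0 < \<epsilon>1\<close> \<open>0 < \<epsilon>2\<close> by (simp add: \<epsilon>_def)
  have "d \<noteq> (\<lambda>_. 0)"
    using \<open>l \<noteq> l'\<close> by (metis d_def eq_iff_diff_eq_0 ext)
  moreover have "d b = 0"
    using \<open>l b = -1\<close> \<open>l' b = -1\<close> by (simp add: d_def)
  ultimately have "\<not> proportional (w \<epsilon>) (w (- \<epsilon>))"
    unfolding w_def using \<open>l b = -1\<close> \<open>0 < \<epsilon>\<close>
    by (intro not_proportional_symmetric_perturbation) auto
  moreover have "w \<epsilon> \<in> Nbeta A b" "w (- \<epsilon>) \<in> Nbeta A b"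
    using \<epsilon>1 \<open>0 < \<epsilon>\<close> by (auto simp: \<epsilon>_def)
  moreover have "l = (\<lambda>a. (1 / 2) * w \<epsilon> a + (1 - 1 / 2) * w (- \<epsilon>) a)"
    by (simp add: w_def algebra_simps)
  moreover have "sigma_affine_on_segment X A (w \<epsilon>) (w (- \<epsilon>))"
    unfolding w_def using \<epsilon>2
    by (intro sigma_affine_on_symmetric_segment[OF \<open>0 < \<epsilon>\<close>]) (auto simp: \<epsilon>_def w_def)
  moreover have "(0::real) < 1 / 2" "(1::real) / 2 < 1"
    by simp_all
  ultimately show False
    using circ unfolding X_circuit_def by blast
qed

lemma finite_Lambda_X_halfspaces:
  fixes aa :: "'h \<Rightarrow> 'a::euclidean_space"
  assumes F: "finite F" and X: "X = {x. \<forall>h\<in>F. aa h \<bullet> x \<le> bb h}" and "X \<noteq> {}" and "finite A"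
  shows "finite (Lambda_X X A)"
proof -
  let ?L = "Lambda_X X A"
  have "\<forall>l\<in>?L. \<exists>t. fst t \<in> A \<and> X_circuit X A (fst t) l \<and> l (fst t) = -1 \<and> fst (snd t) \<in> X \<and>
      dual_certificate F aa bb (fst (snd t)) (snd (snd t)) (- Amap A l)"
  proof
    fix l assume "l \<in> ?L"
    then obtain b where b: "b \<in> A" "X_circuit X A b l" "l b = -1"
      unfolding Lambda_X_def by blast
    moreover obtain xs \<mu> where "xs \<in> X" "dual_certificate F aa bb xs \<mu> (- Amap A l)"
      using sigmaX_dual_certificate[OF F X \<open>X \<noteq> {}\<close> X_circuitD(2)[OF b(2)]] by blast
    ultimately show "\<exists>t. fst t \<in> A \<and> X_circuit X A (fst t) l \<and> l (fst t) = -1 \<and> fst (snd t) \<in> X \<and>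
        dual_certificate F aa bb (fst (snd t)) (snd (snd t)) (- Amap A l)"
      by (intro exI[of _ "(b, xs, \<mu>)"]) simp
  qed
  from bchoice[OF this] obtain t where t: "\<forall>l\<in>?L. fst (t l) \<in> A \<and> X_circuit X A (fst (t l)) l \<and>
      l (fst (t l)) = -1 \<and> fst (snd (t l)) \<in> X \<and>
      dual_certificate F aa bb (fst (snd (t l))) (snd (snd (t l))) (- Amap A l)"
    by blast
  define b where "b l = fst (t l)" for l
  define \<mu> where "\<mu> l = snd (snd (t l))" for l
  define signature where "signature l = (b l, {a\<in>A. l a = 0}, {h\<in>F. \<mu> l h = 0})" for l
  have "inj_on signature ?L"
  proof (rule inj_onI)
    fix l l' assume l: "l \<in> ?L" and l': "l' \<in> ?L" and "signature l = signature l'"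
    then have "b l' = b l" and zeros: "\<forall>a\<in>A. l a = 0 \<longrightarrow> l' a = 0"
      and face: "\<forall>h\<in>F. \<mu> l h = 0 \<longrightarrow> \<mu> l' h = 0"
      by (auto simp: signature_def set_eq_iff)
    have c: "X_circuit X A (b l) l" "l (b l) = -1" "fst (snd (t l)) \<in> X"
      "dual_certificate F aa bb (fst (snd (t l))) (\<mu> l) (- Amap A l)"
      using t l by (auto simp: b_def \<mu>_def)
    have c': "X_circuit X A (b l) l'" "l' (b l) = -1"
      "dual_certificate F aa bb (fst (snd (t l'))) (\<mu> l') (- Amap A l')"
      using t l' \<open>b l' = b l\<close> by (auto simp: b_def \<mu>_def)
    show "l = l'"
      by (rule X_circuit_eq_if_same_face[OF F X \<open>finite A\<close> c(1) c'(1) c(2) c'(2) zeros c(3,4) c'(3) face])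
  qed
  moreover have "signature ` ?L \<subseteq> A \<times> Pow A \<times> Pow F"
    using t by (auto simp: signature_def b_def)
  ultimately show ?thesis
    using inj_on_finite \<open>finite A\<close> F by blast
qed

lemma finite_Lambda_X:
  fixes X :: "'a::euclidean_space set"
  assumes "polyhedron X" and "X \<noteq> {}" and "finite A"
  shows "finite (Lambda_X X A)"
proof -
  obtain F and aa :: "'a set \<Rightarrow> 'a" and bb where "finite F" "X = {x. \<forall>h\<in>F. aa h \<bullet> x \<le> bb h}"
    using polyhedron_halfspaces[OF assms(1)] by blast
  from finite_Lambda_X_halfspaces[OF this assms(2,3)] show ?thesis .
qed

section \<open>Separation in the circuit graph\<close>

lemma Lambda_X_RA: "l \<in> Lambda_X X A \<Longrightarrow> l \<in> RA A"
  by (auto simp: Lambda_X_def X_circuit_def Nbeta_def)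

lemma Lambda_X_eq_if_proportional:
  assumes "s \<in> Lambda_X X A" and "l \<in> Lambda_X X A" and "0 < k" and "0 \<le> t"
    and scaled: "\<forall>a. k * s a = t * l a"
  shows "s = l"
proof -
  obtain b where b: "b \<in> A" "X_circuit X A b l" "l b = -1"
    using assms(2) unfolding Lambda_X_def by blast
  obtain b' where b': "b' \<in> A" "s b' = -1"
    using assms(1) unfolding Lambda_X_def by blast
  have "b' = b"
  proof (rule ccontr)
    assume "b' \<noteq> b"
    then have "0 \<le> l b'"
      using X_circuitD(1)[OF b(2)] b'(1) by (auto simp: Nbeta_def)
    with \<open>0 \<le> t\<close> have "0 \<le> t * l b'"
      by simp
    with scaled[rule_format, of b'] b'(2) \<open>0 < k\<close> show False
      by simp
  qed
  with scaled[rule_format, of b] b(3) b'(2) have "t = k"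
    by simp
  with scaled \<open>0 < k\<close> show "s = l"
    by (auto simp: fun_eq_iff)
qed

lemma ray_self: "p \<in> ray p"
  unfolding ray_def by (intro CollectI exI[of _ 1]) simp

text \<open>If \<open>\<phi>\<^sub>l\<close> were in the cone generated by the other \<open>\<phi>\<^sub>s\<close> and \<open>(0, 1)\<close>, splitting off one term with a
  positive coefficient would decompose \<open>\<phi>\<^sub>l\<close> inside the circuit graph, and extremality forces that
  term onto the ray of \<open>\<phi>\<^sub>l\<close>.\<close>

lemma Lambda_star_not_cone_combination:
  assumes l: "l \<in> Lambda_star X A" and L: "finite L" "L \<subseteq> Lambda_X X A" "l \<notin> L"
  shows "\<not> (\<exists>c c0. (\<forall>s\<in>L. 0 \<le> c s) \<and> 0 \<le> c0 \<and>
            (\<forall>a\<in>A. fst (phi_vec X A l) a = (\<Sum>s\<in>L. c s * fst (phi_vec X A s) a)) \<and>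
            snd (phi_vec X A l) = (\<Sum>s\<in>L. c s * snd (phi_vec X A s)) + c0)"
proof clarify
  fix c c0 assume c: "\<forall>s\<in>L. 0 \<le> c s" and "0 \<le> c0"
    and comb: "\<forall>a\<in>A. fst (phi_vec X A l) a = (\<Sum>s\<in>L. c s * fst (phi_vec X A s) a)"
    and comb0: "snd (phi_vec X A l) = (\<Sum>s\<in>L. c s * snd (phi_vec X A s)) + c0"
  define \<sigma> where "\<sigma> s = snd (phi_vec X A s)" for s
  have pv: "phi_vec X A s = (s, \<sigma> s)" for s
    by (simp add: \<sigma>_def phi_vec_def)
  have lL: "l \<in> Lambda_X X A"
    using l by (simp add: Lambda_star_def)
  obtain b where b: "b \<in> A" "l b = -1"
    using lL unfolding Lambda_X_def by blast
  obtain s where s: "s \<in> L" "0 < c s"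
  proof (rule ccontr)
    assume "\<not> thesis"
    with that c have "\<forall>s\<in>L. c s = 0"
      by force
    with comb b show False
      by (simp add: pv)
  qed
  define u where "u = ((\<lambda>a. c s * s a), c s * \<sigma> s)"
  define v where "v = ((\<lambda>a. \<Sum>t\<in>L - {s}. c t * t a), (\<Sum>t\<in>L - {s}. c t * \<sigma> t) + c0)"
  have "u \<in> circuit_graph X A"
    unfolding circuit_graph_def
    using L(2) s by (intro CollectI exI[of _ "{s}"] exI[of _ "\<lambda>_. c s"] exI[of _ 0]) (auto simp: u_def pv)
  moreover have "v \<in> circuit_graph X A"
    unfolding circuit_graph_def using L c \<open>0 \<le> c0\<close>
    by (intro CollectI exI[of _ "L - {s}"] exI[of _ c] exI[of _ c0]) (auto simp: v_def pv)
  moreover have "padd u v = phi_vec X A l"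
  proof -
    have "c s * s a + (\<Sum>t\<in>L - {s}. c t * t a) = l a" for a
    proof (cases "a \<in> A")
      case True
      then show ?thesis
        using comb sum.remove[OF L(1) s(1), of "\<lambda>t. c t * t a"] by (simp add: pv)
    next
      case False
      then have "l a = 0" "\<forall>t\<in>L. t a = 0"
        using Lambda_X_RA lL L(2) by (auto simp: RA_def)
      then show ?thesis
        using s(1) by (simp add: sum.neutral)
    qed
    moreover have "c s * \<sigma> s + ((\<Sum>t\<in>L - {s}. c t * \<sigma> t) + c0) = \<sigma> l"
      using comb0 sum.remove[OF L(1) s(1), of "\<lambda>t. c t * \<sigma> t"] by (simp add: pv)
    ultimately show ?thesis
      by (simp add: padd_def u_def v_def pv fun_eq_iff)
  qed
  ultimately have "u \<in> ray (phi_vec X A l)"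
    using l ray_self[of "phi_vec X A l"] by (auto simp: Lambda_star_def extreme_ray_def)
  then obtain t where "0 \<le> t" "\<forall>a. c s * s a = t * l a"
    by (auto simp: ray_def u_def pv fun_eq_iff)
  with L(2) s lL have "s = l"
    using Lambda_X_eq_if_proportional by blast
  with s(1) L(3) show False
    by simp
qed

lemma phi_cong: "(\<forall>a\<in>A. y a = y' a) \<Longrightarrow> phi X A s y = phi X A s y'"
  by (simp add: phi_def)

lemma phi_at_point_nonneg:
  assumes "x0 \<in> X" and "sigmaX X (- Amap A s) < \<infinity>"
  shows "0 \<le> phi X A s (\<lambda>a. a \<bullet> x0)"
proof -
  have "X \<noteq> {}"
    using assms(1) by blast
  then obtain r where r: "sigmaX X (- Amap A s) = ereal r" and "\<forall>x\<in>X. - Amap A s \<bullet> x \<le> r"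
    and "\<forall>\<epsilon>>0. \<exists>x\<in>X. r - \<epsilon> < - Amap A s \<bullet> x"
    by (rule sigmaX_finite[OF _ assms(2)])
  then have "- Amap A s \<bullet> x0 \<le> r"
    using assms(1) by blast
  moreover have "- Amap A s \<bullet> x0 = - (\<Sum>a\<in>A. (a \<bullet> x0) * s a)"
    by (simp add: Amap_def inner_sum_left mult.commute)
  ultimately show ?thesis
    by (simp add: phi_def r)
qed

lemma phi_rescale:
  assumes "t + \<epsilon> \<noteq> 0"
  shows "phi X A s (\<lambda>a. (y a + \<epsilon> * w a) / (t + \<epsilon>)) =
    ((\<Sum>a\<in>A. y a * s a) + t * real_of_ereal (sigmaX X (- Amap A s)) + \<epsilon> * phi X A s w) / (t + \<epsilon>)"
proof -
  have "(\<Sum>a\<in>A. (y a + \<epsilon> * w a) / (t + \<epsilon>) * s a) = ((\<Sum>a\<in>A. y a * s a) + \<epsilon> * (\<Sum>a\<in>A. w a * s a)) / (t + \<epsilon>)"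
    by (simp add: sum_divide_distrib[symmetric] sum.distrib sum_distrib_left algebra_simps)
  with assms show ?thesis
    by (simp add: phi_def field_simps)
qed

lemma phi_separator_from_functional:
  assumes "x0 \<in> X" and "L \<subseteq> Lambda_X X A" and "l \<in> Lambda_X X A" and "0 \<le> t"
    and L: "\<forall>s\<in>L. 0 \<le> (\<Sum>a\<in>A. y a * s a) + t * real_of_ereal (sigmaX X (- Amap A s))"
    and l: "(\<Sum>a\<in>A. y a * l a) + t * real_of_ereal (sigmaX X (- Amap A l)) < 0"
  shows "\<exists>y'\<in>RA A. (\<forall>s\<in>L. 0 \<le> phi X A s y') \<and> phi X A l y' < 0"
proof -
  define x where "x a = a \<bullet> x0" for a :: 'a
  have x: "0 \<le> phi X A s x" if "s \<in> Lambda_X X A" for s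
    using phi_at_point_nonneg[OF assms(1)] that unfolding x_def
    by (auto simp: Lambda_X_def X_circuit_def)
  define G where "G = (\<Sum>a\<in>A. y a * l a) + t * real_of_ereal (sigmaX X (- Amap A l))"
  define P where "P = phi X A l x"
  define \<epsilon> where "\<epsilon> = (if P = 0 then 1 else - G / (2 * P))"
  have "G < 0"
    using l by (simp add: G_def)
  have "0 < \<epsilon> \<and> G + \<epsilon> * P < 0"
  proof (cases "P = 0")
    case True
    then show ?thesis
      using \<open>G < 0\<close> by (simp add: \<epsilon>_def)
  next
    case False
    then have "0 < P"
      using x[OF assms(3)] by (simp add: P_def)
    then show ?thesis
      using \<open>G < 0\<close> by (simp add: \<epsilon>_def divide_pos_pos divide_neg_pos)
  qed
  then have "0 < \<epsilon>" "G + \<epsilon> * phi X A l x < 0"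
    by (simp_all add: P_def)
  define y' where "y' a = (if a \<in> A then (y a + \<epsilon> * x a) / (t + \<epsilon>) else 0)" for a
  have y': "phi X A s y' = ((\<Sum>a\<in>A. y a * s a) + t * real_of_ereal (sigmaX X (- Amap A s)) + \<epsilon> * phi X A s x) / (t + \<epsilon>)"
    for s
    using \<open>0 < \<epsilon>\<close> \<open>0 \<le> t\<close> by (subst phi_rescale[symmetric]) (auto simp: y'_def intro: phi_cong)
  have "y' \<in> RA A"
    by (simp add: RA_def y'_def)
  moreover have "\<forall>s\<in>L. 0 \<le> phi X A s y'"
    using L x assms(2) \<open>0 < \<epsilon>\<close> \<open>0 \<le> t\<close> by (auto simp: y' intro!: divide_nonneg_pos)
  moreover have "phi X A l y' < 0"
    using \<open>G + \<epsilon> * phi X A l x < 0\<close> \<open>0 < \<epsilon>\<close> \<open>0 \<le> t\<close> by (simp add: y' G_def divide_neg_pos)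
  ultimately show ?thesis
    by blast
qed

theorem lemma5p12:
  fixes X :: "'a::euclidean_space set" and A :: "'a set" and L :: "('a \<Rightarrow> real) set"
  assumes "X \<noteq> {}" and "closed X" and "convex X" and "polyhedron X"
    and "finite A" and "A \<noteq> {}" and "exp_lin_indep X A"
    and "L \<subset> Lambda_star X A"
  shows "\<exists>y\<in>RA A. (\<forall>l'\<in>L. phi X A l' y \<ge> 0) \<and> (\<exists>l\<in>Lambda_star X A - L. phi X A l y < 0)"
proof -
  obtain l where l: "l \<in> Lambda_star X A" "l \<notin> L"
    using assms(8) by blast
  have L: "L \<subseteq> Lambda_X X A" and "l \<in> Lambda_X X A"
    using assms(8) l(1) by (auto simp: Lambda_star_def)
  moreover have "finite L"
    using finite_subset[OF L finite_Lambda_X[OF assms(4,1,5)]] .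
  ultimately obtain y t where "0 \<le> t"
    "\<forall>s\<in>L. 0 \<le> (\<Sum>a\<in>A. y a * s a) + t * real_of_ereal (sigmaX X (- Amap A s))"
    "(\<Sum>a\<in>A. y a * l a) + t * real_of_ereal (sigmaX X (- Amap A l)) < 0"
    using farkas_RA_times_real[OF assms(5) \<open>finite L\<close> Lambda_star_not_cone_combination[OF l(1) \<open>finite L\<close> L l(2)]]
    by (auto simp: phi_vec_def)
  moreover obtain x0 where "x0 \<in> X"
    using assms(1) by blast
  ultimately obtain y' where "y' \<in> RA A" "\<forall>s\<in>L. 0 \<le> phi X A s y'" "phi X A l y' < 0"
    using phi_separator_from_functional[OF _ L \<open>l \<in> Lambda_X X A\<close>] by blast
  with l show ?thesis
    by blast
qed

end
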